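(* Let $E$ be a real affine space of dimension $n$ with a system of coordinates $\mathcal L=(\ell_1,\dots,\ell_n)$, and let $\mathcal P,\mathcal Q$ be Yao-Yao partitions of $E$ adapted to $\mathcal L$, with centers $x$ and $y$ respectively. Suppose that for some $k<n$: $\mathcal P(\epsilon_1,\dots,\epsilon_k)=\mathcal Q(\epsilon_1,\dots,\epsilon_k)$ for all $(\epsilon_1,\dots,\epsilon_k)\in\{-1,1\}^k$, and there exists $(\epsilon'_1,\dots,\epsilon'_{k+1})\in\{-1,1\}^{k+1}$ with $\mathcal P(\epsilon'_1,\dots,\epsilon'_{k+1})\neq\mathcal Q(\epsilon'_1,\dots,\epsilon'_{k+1})$. If $x_{k+1}\ge y_{k+1}$, then there exist $\delta_1,\dots,\delta_k\in\{-1,1\}$ such that $\mathcal P(\delta_1,\dots,\delta_k,1)$ is strictly included in $\mathcal Q(\delta_1,\dots,\delta_k,1)$.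
   Context: $\vec E$ is the vector space of $E$. A partition of $E$ is a collection of subsets covering $E$ whose distinct members have disjoint interiors. Yao-Yao partitions and their centers are defined by induction on dimension: if $E=\{x\}$, the Yao-Yao partition is $\{\{x\}\}$, with center $x$; if $\dim E=n\ge1$, $\mathcal P$ is a Yao-Yao partition of $E$ with center $x$ if there exist an affine hyperplane $F$, a vector $v\in\vec E\setminus\vec F$ (the axis) and two Yao-Yao partitions $\mathcal P_1,\mathcal P_{-1}$ of $F$ with the same center $x$ such that $\mathcal P=\{A+\mathbb R_-v: A\in\mathcal P_{-1}\}\cup\{A+\mathbb R_+v: A\in\mathcal P_1\}$. A system of coordinates is a family $(\ell_1,\dots,\ell_n)$ of affine forms such that $x\mapsto(\ell_i(x))_i$ is a bijection $E\to\mathbb R^n$; write $x_i=\ell_i(x)$, $v_i=\vec\ell_i(v)$. A Yao-Yao partition given by $F,v,x,\mathcal P_1,\mathcal P_{-1}$ is adapted to $(\ell_1,\dots,\ell_n)$ if $F=\{z: z_1=x_1\}$ and $\mathcal P_1,\mathcal P_{-1}$ are adapted to the system $(\ell_2|_F,\dots,\ell_n|_F)$ of $F$ (in dimension $0$ every Yao-Yao partition is adapted). For an adapted partition one may take the axis normalized, $v_1=1$ (replacing $v$ by $v/v_1$, and exchanging $\mathcal P_1,\mathcal P_{-1}$ if $v_1<0$). With such a normalized presentation, define $\mathcal P(\emptyset)=E$ and, for $(\epsilon_1,\dots,\epsilon_k)\in\{-1,1\}^k$, $1\le k\le n$, recursively $\mathcal P(\epsilon_1,\dots,\epsilon_k)=\mathcal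 P_{\epsilon_1}(\epsilon_2,\dots,\epsilon_k)+\mathbb R_+(\epsilon_1 v)$, where $\mathcal P_{\epsilon_1}(\cdot)$ is the analogous object for the partition $\mathcal P_{\epsilon_1}$ of $F$ (with $\mathcal P_{\epsilon_1}(\emptyset)=F$). Then $\mathcal P=\{\mathcal P(\epsilon):\epsilon\in\{-1,1\}^n\}$. *)

theory Defs
  imports "HOL-Analysis.Analysis"
begin

text \<open>The real affine space E is modelled as a real vector space 'a (vectors of E = 'a).
  Coordinates are indexed from 0: L 0, ..., L (n-1) correspond to l_1, ..., l_n.\<close>

definition affine_form :: "('a::real_vector \<Rightarrow> real) \<Rightarrow> bool" where
  "affine_form f \<longleftrightarrow> linear (\<lambda>z. f z - f 0)"

definition lin_part :: "('a::real_vector \<Rightarrow> real) \<Rightarrow> 'a \<Rightarrow> real" where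
  "lin_part f v = f v - f 0"

definition coord_system :: "nat \<Rightarrow> (nat \<Rightarrow> 'a::real_vector \<Rightarrow> real) \<Rightarrow> bool" where
  "coord_system n L \<longleftrightarrow> (\<forall>i<n. affine_form (L i)) \<and>
     bij_betw (\<lambda>z. map (\<lambda>i. L i z) [0..<n]) UNIV {xs. length xs = n}"

text \<open>The axis used after choosing signs s = (e_1,...,e_j) (j < n) is  a s ; it is the axis
  of the sub-partition P_{e_1}...(e_j) of the affine subspace {z. z_i = x_i, i <= j}, hence
  its linear coordinates 1..j vanish (it lies in the direction of that subspace) and it is
  normalized: its (j+1)-th linear coordinate is 1.\<close>
definition yy_adapted ::
  "nat \<Rightarrow> (nat \<Rightarrow> 'a::real_vector \<Rightarrow> real) \<Rightarrow> 'a \<Rightarrow> (real list \<Rightarrow> 'a) \<Rightarrow> bool" where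
  "yy_adapted n L x a \<longleftrightarrow>
     (\<forall>s. length s < n \<and> set s \<subseteq> {-1, 1} \<longrightarrow>
        (\<forall>i<length s. lin_part (L i) (a s) = 0) \<and> lin_part (L (length s)) (a s) = 1)"

text \<open>The cells: yy_cell L x a s es is the set P_{s}(es) of the sub-partition reached after the
  signs s, i.e. yy_cell L x a [] es = P(es), with P(emptyset) the whole current subspace and
  P(e # es) = P_e(es) + R_+ (e v).\<close>
fun yy_cell ::
  "(nat \<Rightarrow> 'a::real_vector \<Rightarrow> real) \<Rightarrow> 'a \<Rightarrow> (real list \<Rightarrow> 'a) \<Rightarrow> real list \<Rightarrow> real list \<Rightarrow> 'a set" where
  "yy_cell L x a s [] = {z. \<forall>i<length s. L i z = L i x}"
| "yy_cell L x a s (e # es) =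
     {p + t *\<^sub>R (e *\<^sub>R a s) | p t. p \<in> yy_cell L x a (s @ [e]) es \<and> t \<ge> 0}"

end

theory Submission
  imports Defs
begin

text \<open>A point lies in the cell \<open>P(\<epsilon>)\<close> iff, sliding it back towards the centre along the successive
  axes, each slide has the sign prescribed by \<open>\<epsilon>\<close>. Testing equality of the level-\<open>k\<close> cells
  with the centre and with centre plus axis shows that the centres and all axes of \<open>P\<close> and \<open>Q\<close>
  have the same first \<open>k\<close> coordinates. Then the \<open>(k+1)\<close>-th coordinate reached by the
  \<open>Q\<close>-slides exceeds that reached by the \<open>P\<close>-slides by \<open>x\<^sub>k\<^sub>+\<^sub>1 - y\<^sub>k\<^sub>+\<^sub>1\<close> plus the sum over
  \<open>j \<le> k\<close> of the \<open>j\<close>-th slide times the gap between the \<open>(k+1)\<close>-th coordinates of the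
  \<open>j\<close>-th axes. Choosing each \<open>\<delta>\<^sub>j\<close> with the sign of its gap makes every term nonnegative on
  \<open>P(\<delta>,1)\<close>, so \<open>P(\<delta>,1) \<subseteq> Q(\<delta>,1)\<close>. An explicit point shows strictness when
  \<open>x\<^sub>k\<^sub>+\<^sub>1 > y\<^sub>k\<^sub>+\<^sub>1\<close> or some gap is nonzero; otherwise the two partitions would agree
  on all cells of level \<open>k+1\<close>.\<close>

lemma affine_form_add: "affine_form f \<Longrightarrow> f (p + v) = f p + lin_part f v"
  unfolding affine_form_def lin_part_def
  using real_vector.linear_add[of "\<lambda>z. f z - f 0" p v] by simp

lemma affine_form_diff: "affine_form f \<Longrightarrow> f (p - v) = f p - lin_part f v"
  using affine_form_add[of f p "- v"] unfolding affine_form_def lin_part_def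
  using real_vector.linear_diff[of "\<lambda>z. f z - f 0" 0 v] by simp

lemma lin_part_scaleR: "affine_form f \<Longrightarrow> lin_part f (c *\<^sub>R v) = c * lin_part f v"
  unfolding affine_form_def lin_part_def
  using linear_cmul[of "\<lambda>z. f z - f 0" c v] by simp

lemma sign_mult_self: "e \<in> {-1, 1} \<Longrightarrow> e * e = (1::real)"
  by auto

lemma list_update_signs: "set ds \<subseteq> {-1, 1} \<Longrightarrow> e \<in> {-1, 1} \<Longrightarrow> set (ds[j := e]) \<subseteq> {-1, 1}"
  using set_update_subset_insert[of ds j e] by blast

lemma nth_in_signs: "set ds \<subseteq> {-1, 1} \<Longrightarrow> i < length ds \<Longrightarrow> ds ! i \<in> {-1, 1}"
  using nth_mem by blast

text \<open>\<open>yy_proj L x a ds z i\<close> is the point reached from \<open>z\<close> by sliding it successively along the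
  axes \<open>a (take j ds)\<close>, \<open>j < i\<close>, until its \<open>j\<close>-th coordinate is \<open>x\<^sub>j\<close>.\<close>

primrec yy_proj ::
  "(nat \<Rightarrow> 'a::real_vector \<Rightarrow> real) \<Rightarrow> 'a \<Rightarrow> (real list \<Rightarrow> 'a) \<Rightarrow> real list \<Rightarrow> 'a \<Rightarrow> nat \<Rightarrow> 'a" where
  "yy_proj L x a ds z 0 = z"
| "yy_proj L x a ds z (Suc i) =
     yy_proj L x a ds z i - (L i (yy_proj L x a ds z i) - L i x) *\<^sub>R a (take i ds)"

definition yy_sign_test ::
  "(nat \<Rightarrow> 'a::real_vector \<Rightarrow> real) \<Rightarrow> 'a \<Rightarrow> (real list \<Rightarrow> 'a) \<Rightarrow> real list \<Rightarrow> 'a \<Rightarrow> bool" where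
  "yy_sign_test L x a ds z \<longleftrightarrow>
     (\<forall>i<length ds. 0 \<le> ds ! i * (L i (yy_proj L x a ds z i) - L i x))"

lemma yy_proj_append: "i \<le> length ds \<Longrightarrow> yy_proj L x a (ds @ es) z i = yy_proj L x a ds z i"
  by (induction i) auto

lemma yy_proj_fixed: "(\<And>j. j < i \<Longrightarrow> L j z = L j x) \<Longrightarrow> yy_proj L x a ds z i = z"
  by (induction i) auto

lemma yy_proj_stays:
  "m \<le> i \<Longrightarrow> (\<And>j. m \<le> j \<Longrightarrow> j < i \<Longrightarrow> L j (yy_proj L x a ds z j) = L j x)
    \<Longrightarrow> yy_proj L x a ds z i = yy_proj L x a ds z m"
proof (induction i)
  case (Suc i)
  show ?case
  proof (cases "m = Suc i")
    case False
    then have "m \<le> i"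
      using Suc.prems(1) by simp
    then show ?thesis
      using Suc.IH Suc.prems(2)[of i] Suc.prems(2) by simp
  qed simp
qed simp

lemma yy_proj_eq_from:
  "m \<le> i \<Longrightarrow> yy_proj L x a ds z m = yy_proj L x a ds z' m
    \<Longrightarrow> yy_proj L x a ds z i = yy_proj L x a ds z' i"
  by (induction i) (auto simp: le_Suc_eq)

lemma yy_proj_coord:
  assumes "affine_form (L c)"
  shows "L c (yy_proj L x a ds z i) = L c z
     - (\<Sum>j<i. (L j (yy_proj L x a ds z j) - L j x) * lin_part (L c) (a (take j ds)))"
  by (induction i) (simp_all add: affine_form_diff[OF assms] lin_part_scaleR[OF assms])

lemma yy_sign_test_snoc:
  "length ds = k \<Longrightarrow> yy_sign_test L x a (ds @ [e]) z \<longleftrightarrow>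
     yy_sign_test L x a ds z \<and> 0 \<le> e * (L k (yy_proj L x a ds z k) - L k x)"
  unfolding yy_sign_test_def by (auto simp: yy_proj_append nth_append less_Suc_eq)

locale yy_partition =
  fixes n :: nat and L :: "nat \<Rightarrow> 'a::real_vector \<Rightarrow> real"
    and x :: 'a and a :: "real list \<Rightarrow> 'a"
  assumes affine_coord: "i < n \<Longrightarrow> affine_form (L i)"
    and adapted: "yy_adapted n L x a"
begin

lemma axis_coord_before:
  "length s < n \<Longrightarrow> set s \<subseteq> {-1, 1} \<Longrightarrow> i < length s \<Longrightarrow> lin_part (L i) (a s) = 0"
  using adapted unfolding yy_adapted_def by blast

lemma axis_coord_own:
  "length s < n \<Longrightarrow> set s \<subseteq> {-1, 1} \<Longrightarrow> lin_part (L (length s)) (a s) = 1"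
  using adapted unfolding yy_adapted_def by blast

lemma coord_add_axis:
  assumes "length s < n" "set s \<subseteq> {-1, 1}" "i \<le> length s"
  shows "L i (z + c *\<^sub>R a s) = L i z + (if i = length s then c else 0)"
  using assms affine_coord[of i] axis_coord_before[of s i] axis_coord_own[of s]
  by (auto simp: affine_form_add lin_part_scaleR)

lemma yy_cell_coord:
  assumes "length (s @ es) \<le> n" "set (s @ es) \<subseteq> {-1, 1}"
    and "z \<in> yy_cell L x a s es" "i < length s"
  shows "L i z = L i x"
  using assms
proof (induction es arbitrary: s z)
  case (Cons e es)
  then obtain p t where "z = p + (t * e) *\<^sub>R a s" "p \<in> yy_cell L x a (s @ [e]) es"
    by auto
  moreover have "L i p = L i x"
    using Cons.IH[of "s @ [e]" p] Cons.prems \<open>p \<in> yy_cell L x a (s @ [e]) es\<close> by simp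
  ultimately show ?case
    using Cons.prems by (simp add: coord_add_axis)
qed simp

lemma yy_cell_Cons_iff:
  assumes "length (s @ e # es) \<le> n" "set (s @ e # es) \<subseteq> {-1, 1}"
  defines "m \<equiv> length s"
  shows "z \<in> yy_cell L x a s (e # es) \<longleftrightarrow>
    0 \<le> e * (L m z - L m x) \<and> z - (L m z - L m x) *\<^sub>R a s \<in> yy_cell L x a (s @ [e]) es"
proof
  assume "z \<in> yy_cell L x a s (e # es)"
  then obtain p t where z: "z = p + (t * e) *\<^sub>R a s" and p: "p \<in> yy_cell L x a (s @ [e]) es"
    and t: "0 \<le> t"
    by auto
  have "L m p = L m x"
    using yy_cell_coord[of "s @ [e]" es p m] assms p by simp
  then have d: "L m z - L m x = t * e"
    using assms unfolding z by (simp add: coord_add_axis)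
  have "e * e = 1"
    using assms by (simp add: sign_mult_self)
  then have "e * (t * e) = t"
    by (metis mult.commute mult.left_commute mult.right_neutral)
  then have "0 \<le> e * (L m z - L m x)"
    using t unfolding d by argo
  moreover have "z - (L m z - L m x) *\<^sub>R a s = p"
    unfolding d using z by simp
  ultimately show "0 \<le> e * (L m z - L m x) \<and> z - (L m z - L m x) *\<^sub>R a s \<in> yy_cell L x a (s @ [e]) es"
    using p by simp
next
  define c where "c = L m z - L m x"
  assume "0 \<le> e * c \<and> z - c *\<^sub>R a s \<in> yy_cell L x a (s @ [e]) es"
  moreover have "e * e = 1"
    using assms by (simp add: sign_mult_self)
  then have "z = (z - c *\<^sub>R a s) + (e * c) *\<^sub>R (e *\<^sub>R a s)"
    by (simp add: mult.assoc[symmetric])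
  ultimately show "z \<in> yy_cell L x a s (e # es)"
    unfolding c_def by (subst yy_cell.simps) blast
qed

lemma yy_proj_offset_point:
  assumes "i < n" "i \<le> length ds" "set ds \<subseteq> {-1, 1}"
    and w: "\<And>c. c \<le> i \<Longrightarrow> L c w = L c x"
  shows "yy_proj L x a ds (w + \<sigma> *\<^sub>R a (take i ds)) j =
    (if j \<le> i then w + \<sigma> *\<^sub>R a (take i ds) else yy_proj L x a ds w j)"
proof -
  define z where "z = w + \<sigma> *\<^sub>R a (take i ds)"
  have "length (take i ds) = i" "set (take i ds) \<subseteq> {-1, 1}"
    using assms(2,3) by (auto dest: in_set_takeD)
  then have coord: "L c z = L c x + (if c = i then \<sigma> else 0)" if "c \<le> i" for c
    using coord_add_axis[of "take i ds" c w \<sigma>] w[of c] assms(1) that unfolding z_def by simp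
  then have fixed: "yy_proj L x a ds z c = z" if "c \<le> i" for c
    using that by (intro yy_proj_fixed) simp
  show ?thesis
  proof (cases "j \<le> i")
    case False
    have "yy_proj L x a ds z (Suc i) = w"
      using fixed[of i] coord[of i] unfolding z_def by simp
    also have "\<dots> = yy_proj L x a ds w (Suc i)"
      using w by (intro yy_proj_fixed[symmetric]) simp
    finally show ?thesis
      using yy_proj_eq_from[of "Suc i" j] False unfolding z_def by simp
  qed (use fixed in \<open>simp add: z_def\<close>)
qed

lemma mem_yy_cell_iff:
  assumes "length (s @ es) \<le> n" "set (s @ es) \<subseteq> {-1, 1}"
  shows "z \<in> yy_cell L x a s es \<longleftrightarrow> (\<forall>i<length s. L i z = L i x) \<and>
    (\<forall>i. length s \<le> i \<and> i < length (s @ es) \<longrightarrow>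
       0 \<le> (s @ es) ! i * (L i (yy_proj L x a (s @ es) z i) - L i x))"
  using assms
proof (induction es arbitrary: s z)
  case (Cons e es)
  define m where "m = length s"
  define ds where "ds = s @ e # es"
  define p where "p = z - (L m z - L m x) *\<^sub>R a s"
  have m: "m < n" "take m ds = s" "ds ! m = e" "(s @ [e]) @ es = ds"
    "length ds = Suc (m + length es)"
    using Cons.prems unfolding m_def ds_def by auto
  have "p = z + (- (L m z - L m x)) *\<^sub>R a s"
    unfolding p_def by (simp add: scaleR_minus_left[symmetric] del: scaleR_minus_left minus_diff_eq)
  then have p_coord: "L i p = (if i = m then L m x else L i z)" if "i \<le> m" for i
    using coord_add_axis[of s i z "- (L m z - L m x)"] Cons.prems that
    unfolding m_def by simp
  have "p \<in> yy_cell L x a (s @ [e]) es \<longleftrightarrow> (\<forall>i<Suc m. L i p = L i x) \<and>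
      (\<forall>i. Suc m \<le> i \<and> i < length ds \<longrightarrow> 0 \<le> ds ! i * (L i (yy_proj L x a ds p i) - L i x))"
    using Cons.IH[of "s @ [e]" p] Cons.prems m(4,5) unfolding m_def by simp
  moreover have "(\<forall>i<Suc m. L i p = L i x) \<longleftrightarrow> (\<forall>i<m. L i z = L i x)"
    using p_coord by (auto simp: less_Suc_eq)
  ultimately have z_iff: "z \<in> yy_cell L x a s (e # es) \<longleftrightarrow>
      (\<forall>i<m. L i z = L i x) \<and> 0 \<le> e * (L m z - L m x) \<and>
      (\<forall>i. Suc m \<le> i \<and> i < length ds \<longrightarrow> 0 \<le> ds ! i * (L i (yy_proj L x a ds p i) - L i x))"
    using yy_cell_Cons_iff[of s e es z] Cons.prems unfolding m_def p_def by blast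
  show ?case
  proof (cases "\<forall>i<m. L i z = L i x")
    case True
    have "z = p + (L m z - L m x) *\<^sub>R a (take m ds)"
      unfolding p_def m(2) by simp
    then have "yy_proj L x a ds z i = (if i \<le> m then z else yy_proj L x a ds p i)" for i
      using yy_proj_offset_point[of m ds p "L m z - L m x" i] m Cons.prems True p_coord
      unfolding ds_def m_def by simp
    moreover have "(\<forall>i. m \<le> i \<and> i < length ds \<longrightarrow> Q i) \<longleftrightarrow>
        Q m \<and> (\<forall>i. Suc m \<le> i \<and> i < length ds \<longrightarrow> Q i)" for Q
      using m(5) by (auto simp: Suc_le_eq) (metis le_neq_implies_less)
    ultimately show ?thesis
      using z_iff True m(3) unfolding ds_def[symmetric] m_def[symmetric] by (simp add: not_le)
  next
    case False
    then show ?thesis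
      using z_iff unfolding m_def by blast
  qed
qed simp

lemma yy_cell_iff_sign_test:
  "length ds \<le> n \<Longrightarrow> set ds \<subseteq> {-1, 1} \<Longrightarrow> z \<in> yy_cell L x a [] ds \<longleftrightarrow> yy_sign_test L x a ds z"
  using mem_yy_cell_iff[of "[]" ds z] unfolding yy_sign_test_def by simp

end

text \<open>Ties are broken by \<open>d\<close>, so that \<open>greedy_signs g d\<close> reproduces \<open>d\<close> when all gaps vanish.\<close>

primrec greedy_signs :: "(real list \<Rightarrow> real) \<Rightarrow> real list \<Rightarrow> nat \<Rightarrow> real list" where
  "greedy_signs g d 0 = []"
| "greedy_signs g d (Suc i) = greedy_signs g d i @
     [if g (greedy_signs g d i) = 0 then d ! i else sgn (g (greedy_signs g d i))]"

lemma length_greedy_signs [simp]: "length (greedy_signs g d i) = i"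
  by (induction i) auto

lemma greedy_signs_signs: "set d \<subseteq> {-1, 1} \<Longrightarrow> i \<le> length d \<Longrightarrow> set (greedy_signs g d i) \<subseteq> {-1, 1}"
proof (induction i)
  case (Suc i)
  then have "d ! i \<in> {-1, 1}"
    using nth_in_signs[of d i] by simp
  with Suc show ?case
    by (auto simp: sgn_if)
qed simp

lemma take_greedy_signs: "i \<le> m \<Longrightarrow> take i (greedy_signs g d m) = greedy_signs g d i"
  by (induction m) (auto simp: le_Suc_eq)

lemma greedy_signs_nth_mult:
  assumes "i < m"
  shows "greedy_signs g d m ! i * g (greedy_signs g d i) = \<bar>g (greedy_signs g d i)\<bar>"
proof -
  have "greedy_signs g d m ! i = greedy_signs g d (Suc i) ! i"
    using take_greedy_signs[of "Suc i" m g d] assms by (metis Suc_leI lessI nth_take)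
  then show ?thesis
    by (simp add: nth_append abs_sgn mult.commute)
qed

lemma greedy_signs_eq_take:
  "m \<le> length d \<Longrightarrow> (\<And>i. i < m \<Longrightarrow> g (greedy_signs g d i) = 0) \<Longrightarrow> greedy_signs g d m = take m d"
proof (induction m)
  case (Suc m)
  have "g (greedy_signs g d m) = 0"
    using Suc.prems(2) by simp
  moreover have "greedy_signs g d m = take m d"
    using Suc by simp
  ultimately show ?case
    using Suc.prems(1) by (simp add: take_Suc_conv_app_nth)
qed simp

locale yy_pair = P: yy_partition n L x a + Q: yy_partition n L y b
  for n :: nat and L :: "nat \<Rightarrow> 'a::real_vector \<Rightarrow> real"
    and x :: 'a and a :: "real list \<Rightarrow> 'a" and y :: 'a and b :: "real list \<Rightarrow> 'a" +
  fixes k :: nat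
  assumes k_less: "k < n"
    and cells_eq: "\<And>es. length es = k \<Longrightarrow> set es \<subseteq> {-1, 1} \<Longrightarrow>
      yy_cell L x a [] es = yy_cell L y b [] es"
begin

lemma sign_tests_eq:
  "length ds = k \<Longrightarrow> set ds \<subseteq> {-1, 1} \<Longrightarrow> yy_sign_test L x a ds z \<longleftrightarrow> yy_sign_test L y b ds z"
  using cells_eq[of ds] P.yy_cell_iff_sign_test[of ds z] Q.yy_cell_iff_sign_test[of ds z] k_less
  by simp

definition agree_below :: "nat \<Rightarrow> bool" where
  "agree_below j \<longleftrightarrow> (\<forall>c<j. L c x = L c y \<and>
     (\<forall>s. set s \<subseteq> {-1, 1} \<and> length s < k \<longrightarrow> lin_part (L c) (a s) = lin_part (L c) (b s)))"

lemma proj_coords_agree: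
  assumes "agree_below j" "j \<le> k" "set ds \<subseteq> {-1, 1}" "length ds = k" "i \<le> k" "c < j"
  shows "L c (yy_proj L y b ds z i) = L c (yy_proj L x a ds z i)"
  using assms(5,6)
proof (induction i arbitrary: c)
  case (Suc i)
  have ds_i: "set (take i ds) \<subseteq> {-1, 1}" "length (take i ds) = i" "i < n"
    using assms(3,4) Suc.prems k_less by (auto dest: in_set_takeD)
  have aff: "affine_form (L c)"
    using P.affine_coord Suc.prems assms(2) k_less by simp
  have "lin_part (L c) (a (take i ds)) = lin_part (L c) (b (take i ds))"
  proof (cases "i < j")
    case True
    then show ?thesis using assms(1) ds_i Suc.prems unfolding agree_below_def by simp
  next
    case False
    then show ?thesis
      using P.axis_coord_before[of "take i ds" c] Q.axis_coord_before[of "take i ds" c] ds_i Suc.prems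
      by simp
  qed
  moreover have "L i (yy_proj L y b ds z i) - L i y = L i (yy_proj L x a ds z i) - L i x"
    if "i < j"
    using Suc.IH[of i] Suc.prems that assms(1) unfolding agree_below_def by simp
  moreover have "lin_part (L c) (a (take i ds)) = 0" if "\<not> i < j"
    using P.axis_coord_before[of "take i ds" c] ds_i Suc.prems that by simp
  ultimately show ?case
    using Suc.IH[of c] Suc.prems by (auto simp: affine_form_diff[OF aff] lin_part_scaleR[OF aff])
qed simp

lemma center_coord_eq_step:
  assumes "agree_below j" "j < k"
  shows "L j x = L j y"
proof -
  have "0 \<le> e * (L j x - L j y)" if "e \<in> {-1, 1}" for e
  proof -
    define ds where "ds = (replicate k (1::real))[j := e]"
    have ds: "length ds = k" "set ds \<subseteq> {-1, 1}" "ds ! j = e"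
      using list_update_signs[of "replicate k 1" e j] assms(2) that unfolding ds_def by auto
    have "yy_sign_test L x a ds x"
      unfolding yy_sign_test_def by (simp add: yy_proj_fixed)
    then have "yy_sign_test L y b ds x"
      using sign_tests_eq ds by blast
    moreover have "yy_proj L y b ds x j = x"
      using assms(1) by (intro yy_proj_fixed) (simp add: agree_below_def)
    ultimately show ?thesis
      using ds assms(2) unfolding yy_sign_test_def by force
  qed
  from this[of 1] this[of "-1"] show ?thesis by simp
qed

lemma axis_coord_eq_step:
  assumes "agree_below j" "j < k" "L j x = L j y" "set s \<subseteq> {-1, 1}" "length s < k"
  shows "lin_part (L j) (a s) = lin_part (L j) (b s)"
proof (cases "length s < j")
  case False
  then show ?thesis
    using P.axis_coord_before[of s j] Q.axis_coord_before[of s j]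
      P.axis_coord_own[of s] Q.axis_coord_own[of s] assms(4,5) k_less
    by (cases "length s = j") simp_all
next
  case True
  define m where "m = length s"
  define z where "z = x + a s"
  have agree: "\<forall>c<j. L c x = L c y"
    using assms(1) unfolding agree_below_def by simp
  have z_coord: "L c z = L c x + (if c = m then 1 else 0)" if "c \<le> m" for c
    using P.coord_add_axis[of s c x 1] assms(4,5) k_less that unfolding z_def m_def by simp
  have "0 \<le> e * (lin_part (L j) (a s) - lin_part (L j) (b s))" if e: "e \<in> {-1, 1}" for e
  proof -
    define ds where "ds = (s @ replicate (k - m) (1::real))[j := e]"
    have ds: "length ds = k" "set ds \<subseteq> {-1, 1}" "ds ! j = e" "ds ! m = 1" "take m ds = s"
      using list_update_signs[of "s @ replicate (k - m) 1" e j] assms(2,4,5) True e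
      unfolding ds_def m_def by (auto simp: nth_list_update nth_append take_update_cancel)
    have proj_P: "yy_proj L x a ds z i = (if i \<le> m then z else x)" for i
      using P.yy_proj_offset_point[of m ds x 1 i] assms(2,5) k_less ds True
      unfolding z_def m_def by (simp add: yy_proj_fixed)
    have "yy_sign_test L x a ds z"
      unfolding yy_sign_test_def using proj_P z_coord ds(1,4) by (auto simp: not_le)
    then have test: "0 \<le> e * (L j (yy_proj L y b ds z j) - L j y)"
      using sign_tests_eq ds assms(2) unfolding yy_sign_test_def by force
    moreover have Q_m: "yy_proj L y b ds z m = z"
      using z_coord agree True unfolding m_def by (intro yy_proj_fixed) simp
    have Q_Suc: "yy_proj L y b ds z (Suc m) = z - b s"
      using Q_m z_coord[of m] agree True ds(5) unfolding m_def by simp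
    have "yy_proj L y b ds z j = yy_proj L y b ds z (Suc m)"
    proof (rule yy_proj_stays)
      show "Suc m \<le> j" using True unfolding m_def by simp
      fix i assume "Suc m \<le> i" "i < j"
      then show "L i (yy_proj L y b ds z i) = L i y"
        using proj_coords_agree[of j ds i i z] assms(1,2) ds(1,2) proj_P[of i] agree by simp
    qed
    moreover have "affine_form (L j)"
      using P.affine_coord assms(2) k_less by simp
    ultimately have "L j (yy_proj L y b ds z j) - L j y = lin_part (L j) (a s) - lin_part (L j) (b s)"
      using Q_Suc assms(3) unfolding z_def by (simp add: affine_form_diff affine_form_add)
    then show ?thesis
      using test by simp
  qed
  from this[of 1] this[of "-1"] show ?thesis by simp
qed

lemma agree_below_le: "j \<le> k \<Longrightarrow> agree_below j"
proof (induction j)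
  case (Suc j)
  then have "agree_below j" "j < k"
    by simp_all
  moreover from this have "L j x = L j y"
    by (rule center_coord_eq_step)
  moreover from calculation have
    "\<forall>s. set s \<subseteq> {-1, 1} \<and> length s < k \<longrightarrow> lin_part (L j) (a s) = lin_part (L j) (b s)"
    using axis_coord_eq_step by blast
  ultimately show ?case
    unfolding agree_below_def by (auto simp: less_Suc_eq)
qed (simp add: agree_below_def)

definition axis_gap :: "real list \<Rightarrow> real" where
  "axis_gap s = lin_part (L k) (a s) - lin_part (L k) (b s)"

lemma kth_coord_shift:
  assumes "length ds = k" "set ds \<subseteq> {-1, 1}"
  shows "L k (yy_proj L y b ds z k) - L k y = (L k (yy_proj L x a ds z k) - L k x) + (L k x - L k y)
     + (\<Sum>j<k. (L j (yy_proj L x a ds z j) - L j x) * axis_gap (take j ds))"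
proof -
  have aff: "affine_form (L k)"
    using P.affine_coord k_less by simp
  have "L j (yy_proj L y b ds z j) - L j y = L j (yy_proj L x a ds z j) - L j x" if "j < k" for j
    using proj_coords_agree[of k ds j j z] agree_below_le[of k] assms that
    unfolding agree_below_def by simp
  then have "(\<Sum>j<k. (L j (yy_proj L y b ds z j) - L j y) * lin_part (L k) (b (take j ds)))
     = (\<Sum>j<k. (L j (yy_proj L x a ds z j) - L j x) * lin_part (L k) (b (take j ds)))"
    by (intro sum.cong) simp_all
  then show ?thesis
    unfolding yy_proj_coord[where L = L and c = k and x = x and a = a and ds = ds and z = z and i = k, OF aff]
      yy_proj_coord[where L = L and c = k and x = y and a = b and ds = ds and z = z and i = k, OF aff]
    by (simp add: axis_gap_def right_diff_distrib sum_subtractf)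
qed

lemma cells_snoc_iff:
  assumes "length ds = k" "set ds \<subseteq> {-1, 1}" "e \<in> {-1, 1}"
  shows "z \<in> yy_cell L x a [] (ds @ [e]) \<longleftrightarrow>
      yy_sign_test L x a ds z \<and> 0 \<le> e * (L k (yy_proj L x a ds z k) - L k x)"
    and "z \<in> yy_cell L y b [] (ds @ [e]) \<longleftrightarrow>
      yy_sign_test L x a ds z \<and> 0 \<le> e * (L k (yy_proj L y b ds z k) - L k y)"
proof -
  have "length (ds @ [e]) \<le> n" "set (ds @ [e]) \<subseteq> {-1, 1}"
    using assms k_less by simp_all
  then show "z \<in> yy_cell L x a [] (ds @ [e]) \<longleftrightarrow>
      yy_sign_test L x a ds z \<and> 0 \<le> e * (L k (yy_proj L x a ds z k) - L k x)"
    and "z \<in> yy_cell L y b [] (ds @ [e]) \<longleftrightarrow>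
      yy_sign_test L x a ds z \<and> 0 \<le> e * (L k (yy_proj L y b ds z k) - L k y)"
    using P.yy_cell_iff_sign_test Q.yy_cell_iff_sign_test sign_tests_eq[OF assms(1,2), of z]
      yy_sign_test_snoc[OF assms(1), of L x a e z] yy_sign_test_snoc[OF assms(1), of L y b e z]
    by simp_all
qed

lemma cell_subset:
  assumes "L k y \<le> L k x" "length ds = k" "set ds \<subseteq> {-1, 1}"
    and gap: "\<And>j. j < k \<Longrightarrow> 0 \<le> ds ! j * axis_gap (take j ds)"
  shows "yy_cell L x a [] (ds @ [1]) \<subseteq> yy_cell L y b [] (ds @ [1])"
proof
  fix z assume "z \<in> yy_cell L x a [] (ds @ [1])"
  then have test: "yy_sign_test L x a ds z" and "0 \<le> L k (yy_proj L x a ds z k) - L k x"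
    using cells_snoc_iff(1)[OF assms(2,3)] by auto
  moreover have "0 \<le> (\<Sum>j<k. (L j (yy_proj L x a ds z j) - L j x) * axis_gap (take j ds))"
  proof (intro sum_nonneg)
    fix j assume "j \<in> {..<k}"
    then have j: "j < length ds"
      using assms(2) by simp
    then have "ds ! j \<in> {-1, 1}" "0 \<le> ds ! j * (L j (yy_proj L x a ds z j) - L j x)"
      using assms(3) test nth_in_signs unfolding yy_sign_test_def by auto
    moreover have "0 \<le> ds ! j * axis_gap (take j ds)"
      using gap \<open>j \<in> {..<k}\<close> by simp
    ultimately show "0 \<le> (L j (yy_proj L x a ds z j) - L j x) * axis_gap (take j ds)"
      by (auto simp: zero_le_mult_iff)
  qed
  ultimately show "z \<in> yy_cell L y b [] (ds @ [1])"
    using cells_snoc_iff(2)[OF assms(2,3)] kth_coord_shift[OF assms(2,3), of z] assms(1) by simp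
qed

lemma cells_differ_by_witness:
  assumes "length ds = k" "set ds \<subseteq> {-1, 1}" "yy_sign_test L x a ds z"
    and "L k (yy_proj L x a ds z k) < L k x" "L k (yy_proj L y b ds z k) = L k y"
  shows "yy_cell L x a [] (ds @ [1]) \<noteq> yy_cell L y b [] (ds @ [1])"
  using cells_snoc_iff[OF assms(1,2), of 1 z] assms(3-5) by auto

lemma cells_differ_if_centers_differ:
  assumes "L k y < L k x" "length ds = k" "set ds \<subseteq> {-1, 1}"
  shows "yy_cell L x a [] (ds @ [1]) \<noteq> yy_cell L y b [] (ds @ [1])"
proof -
  define z where "z = x + (L k y - L k x) *\<^sub>R a ds"
  have coord: "L j z = L j x + (if j = k then L k y - L k x else 0)" if "j \<le> k" for j
    using P.coord_add_axis[of ds j x] assms(2,3) k_less that unfolding z_def by simp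
  then have proj: "yy_proj L x a ds z j = z" if "j \<le> k" for j
    using that by (intro yy_proj_fixed) simp
  show ?thesis
  proof (rule cells_differ_by_witness[OF assms(2,3)])
    show "yy_sign_test L x a ds z"
      unfolding yy_sign_test_def using assms(2) proj coord by simp
    show "L k (yy_proj L x a ds z k) < L k x"
      using proj[of k] coord[of k] assms(1) by simp
    show "L k (yy_proj L y b ds z k) = L k y"
      using kth_coord_shift[OF assms(2,3), of z] proj[of k] coord[of k] by (simp add: proj coord)
  qed
qed

lemma cells_differ_if_gap:
  assumes "L k x = L k y" "length ds = k" "set ds \<subseteq> {-1, 1}"
    and "i < k" "0 < ds ! i * axis_gap (take i ds)"
  shows "yy_cell L x a [] (ds @ [1]) \<noteq> yy_cell L y b [] (ds @ [1])"
proof -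
  txt \<open>The witness needs a single nonzero slide, along the \<open>i\<close>-th axis; it is placed so that
    the \<open>k\<close>-th slide is \<open>-\<sigma> \<cdot> axis_gap\<close> for \<open>P\<close> and \<open>0\<close> for \<open>Q\<close>.\<close>
  define \<sigma> where "\<sigma> = ds ! i"
  define shift where "shift = - (\<sigma> * axis_gap (take i ds))"
  define w where "w = x + shift *\<^sub>R a ds"
  define z where "z = w + \<sigma> *\<^sub>R a (take i ds)"
  have "\<sigma> \<in> {-1, 1}"
    using assms(2-4) nth_in_signs unfolding \<sigma>_def by auto
  then have \<sigma>\<sigma>: "\<sigma> * \<sigma> = 1"
    by (rule sign_mult_self)
  have w_coord: "L j w = L j x + (if j = k then shift else 0)" if "j \<le> k" for j
    using P.coord_add_axis[of ds j x shift] assms(2,3) k_less that unfolding w_def by simp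
  have "yy_proj L x a ds w j = w" if "j \<le> k" for j
    using w_coord that by (intro yy_proj_fixed) simp
  then have proj: "yy_proj L x a ds z j = (if j \<le> i then z else w)" if "j \<le> k" for j
    using P.yy_proj_offset_point[of i ds w \<sigma> j] assms(2-4) k_less w_coord that
    unfolding z_def by simp
  have "length (take i ds) < n" "set (take i ds) \<subseteq> {-1, 1}"
    using assms(2,3) k_less by (auto dest: in_set_takeD)
  then have z_coord: "L j z = L j x + (if j = i then \<sigma> else 0)" if "j \<le> i" for j
    using P.coord_add_axis[of "take i ds" j w \<sigma>] w_coord[of j] assms(2,4) that
    unfolding z_def by simp
  have offset: "L j (yy_proj L x a ds z j) - L j x = (if j = i then \<sigma> else 0)" if "j < k" for j
    using proj[of j] z_coord[of j] w_coord[of j] that by (cases "j \<le> i") auto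
  show ?thesis
  proof (rule cells_differ_by_witness[OF assms(2,3)])
    show "yy_sign_test L x a ds z"
      unfolding yy_sign_test_def using assms(2) offset \<sigma>\<sigma> by (simp add: \<sigma>_def)
    show "L k (yy_proj L x a ds z k) < L k x"
      using proj[of k] w_coord[of k] assms(4,5) unfolding shift_def \<sigma>_def by simp
    have "(\<Sum>j<k. (L j (yy_proj L x a ds z j) - L j x) * axis_gap (take j ds))
        = (\<Sum>j<k. if j = i then \<sigma> * axis_gap (take j ds) else 0)"
      by (intro sum.cong) (simp_all add: offset)
    also have "\<dots> = \<sigma> * axis_gap (take i ds)"
      using assms(4) by simp
    finally have "(\<Sum>j<k. (L j (yy_proj L x a ds z j) - L j x) * axis_gap (take j ds))
        = \<sigma> * axis_gap (take i ds)" .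
    then show "L k (yy_proj L y b ds z k) = L k y"
      using kth_coord_shift[OF assms(2,3), of z] proj[of k] w_coord[of k] assms(1,4)
      unfolding shift_def by simp
  qed
qed

lemma next_cells_eq_if_no_gap:
  assumes "L k x = L k y" "length ds = k" "set ds \<subseteq> {-1, 1}" "e \<in> {-1, 1}"
    and "\<And>j. j < k \<Longrightarrow> axis_gap (take j ds) = 0"
  shows "yy_cell L x a [] (ds @ [e]) = yy_cell L y b [] (ds @ [e])"
  using cells_snoc_iff[OF assms(2-4)] kth_coord_shift[OF assms(2,3)] assms(1,5) by auto

lemma strict_subcell_exists:
  assumes "L k y \<le> L k x" "length es = Suc k" "set es \<subseteq> {-1, 1}"
    and "yy_cell L x a [] es \<noteq> yy_cell L y b [] es"
  shows "\<exists>ds. length ds = k \<and> set ds \<subseteq> {-1, 1} \<and>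
    yy_cell L x a [] (ds @ [1]) \<subset> yy_cell L y b [] (ds @ [1])"
proof -
  define d where "d = take k es"
  define e where "e = es ! k"
  have es: "es = d @ [e]" "length d = k" "set d \<subseteq> {-1, 1}" "e \<in> {-1, 1}"
    using assms(2,3) nth_in_signs[of es k] take_Suc_conv_app_nth[of k es]
    unfolding d_def e_def by (auto dest: in_set_takeD)
  define ds where "ds = greedy_signs axis_gap d k"
  have ds: "length ds = k" "set ds \<subseteq> {-1, 1}"
    using greedy_signs_signs[of d k axis_gap] es(2,3) unfolding ds_def by simp_all
  have gap: "ds ! j * axis_gap (take j ds) = \<bar>axis_gap (take j ds)\<bar>" if "j < k" for j
    using greedy_signs_nth_mult[OF that] take_greedy_signs[of j k] that unfolding ds_def by simp
  have "yy_cell L x a [] (ds @ [1]) \<noteq> yy_cell L y b [] (ds @ [1])"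
  proof (cases "L k y < L k x")
    case True
    then show ?thesis using cells_differ_if_centers_differ ds by blast
  next
    case False
    then have centers: "L k x = L k y"
      using assms(1) by simp
    show ?thesis
    proof (cases "\<exists>i<k. axis_gap (take i ds) \<noteq> 0")
      case True
      then show ?thesis
        using cells_differ_if_gap[OF centers ds] gap by fastforce
    next
      case False
      then have "ds = d"
        using greedy_signs_eq_take[of k d axis_gap] es(2) take_greedy_signs[of _ k axis_gap d]
        unfolding ds_def by simp
      then show ?thesis
        using next_cells_eq_if_no_gap[OF centers ds es(4)] False es(1) assms(4) by auto
    qed
  qed
  then show ?thesis
    using cell_subset[OF assms(1) ds] gap ds by auto
qed

end

theorem lemma9:
  fixes L :: "nat \<Rightarrow> 'a::real_vector \<Rightarrow> real"
    and n k :: nat and x y :: 'a and a b :: "real list \<Rightarrow> 'a"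
  assumes "coord_system n L"
    and "yy_adapted n L x a"
    and "yy_adapted n L y b"
    and "k < n"
    and "\<forall>es. length es = k \<and> set es \<subseteq> {-1, 1} \<longrightarrow> yy_cell L x a [] es = yy_cell L y b [] es"
    and "\<exists>es. length es = Suc k \<and> set es \<subseteq> {-1, 1} \<and> yy_cell L x a [] es \<noteq> yy_cell L y b [] es"
    and "L k x \<ge> L k y"
  shows "\<exists>ds. length ds = k \<and> set ds \<subseteq> {-1, 1} \<and>
           yy_cell L x a [] (ds @ [1]) \<subset> yy_cell L y b [] (ds @ [1])"
proof -
  have "yy_pair n L x a y b k"
    using assms(1-5) unfolding yy_pair_def yy_partition_def yy_pair_axioms_def coord_system_def
    by auto
  then show ?thesis
    using yy_pair.strict_subcell_exists assms(6,7) by blast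
qed

end
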